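(* Let $\beta>0$ and let $L:(0,\infty)\to(0,\infty)$ be slowly varying at $\infty$ with $n\mapsto L(e^n)$ ultimately monotonically increasing. For all sufficiently large $y$ define $\tilde g_1^*(y)=\frac{1}{2\beta}\log L(e^{2n-2})$, where $n\ge2$ is the integer with $n-1+\frac{1}{2\beta}\log L(e^{2n-2})\le y<n+\frac{1}{2\beta}\log L(e^{2n})$. Then for any $A>0$, \[ \tilde g_1^*(\log Ax)-\tilde g_1^*(\log x)\to0\qquad\text{as } x\to\infty. \] *)

theory Defs
  imports "HOL-Analysis.Analysis"
begin

definition slowly_varying :: "(real \<Rightarrow> real) \<Rightarrow> bool" where
  "slowly_varying L \<longleftrightarrow>
     (\<forall>x>0. L x > 0) \<and>
     L \<in> borel_measurable (restrict_space borel {0<..}) \<and>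
     (\<forall>lam>0. ((\<lambda>x. L (lam * x) / L x) \<longlongrightarrow> 1) at_top)"

text \<open>The function tilde g_1^*: for y, take the integer n \<ge> 2 with
  n - 1 + log L(e^(2n-2))/(2 beta) \<le> y < n + log L(e^(2n))/(2 beta),
  and return log L(e^(2n-2))/(2 beta). (Only meaningful for large y, where n is unique.)\<close>
definition gstar :: "real \<Rightarrow> (real \<Rightarrow> real) \<Rightarrow> real \<Rightarrow> real" where
  "gstar \<beta> L y =
     (let n = (THE n::nat. 2 \<le> n \<and>
                 real n - 1 + ln (L (exp (2 * real n - 2))) / (2 * \<beta>) \<le> y \<and>
                 y < real n + ln (L (exp (2 * real n))) / (2 * \<beta>))
      in ln (L (exp (2 * real n - 2))) / (2 * \<beta>))"

end

theory Submission
  imports Defs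
begin

text \<open>Put \<open>h n = log L(e\<^sup>2\<^sup>n) / (2\<beta>)\<close>. The half-open intervals
  \<open>[n - 1 + h(n-1), n + h n)\<close> are eventually consecutive and cover a half-line, since \<open>h\<close> is
  eventually nondecreasing, and \<open>g\<^sub>1\<^sup>*(y) = h(n(y) - 1)\<close> where \<open>n(y)\<close> is the interval containing
  \<open>y\<close>. Monotonicity of \<open>h\<close> also shows that shifting \<open>y\<close> by \<open>log A\<close> moves \<open>n(y)\<close> by less than
  \<open>|log A| + 1\<close>. Since \<open>L\<close> is slowly varying, \<open>h (n + 1) - h n \<rightarrow> 0\<close>, so the increments of \<open>h\<close>
  over windows of bounded length tend to zero as well.\<close>

definition in_block :: "(nat \<Rightarrow> real) \<Rightarrow> real \<Rightarrow> nat \<Rightarrow> bool" where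
  "in_block h y n \<longleftrightarrow> 2 \<le> n \<and> real n - 1 + h (n - 1) \<le> y \<and> y < real n + h n"

definition block_index :: "(nat \<Rightarrow> real) \<Rightarrow> real \<Rightarrow> nat" where
  "block_index h y = (THE n. in_block h y n)"

definition level :: "real \<Rightarrow> (real \<Rightarrow> real) \<Rightarrow> nat \<Rightarrow> real" where
  "level \<beta> L n = ln (L (exp (2 * real n))) / (2 * \<beta>)"

lemma in_block_index_diff:
  assumes mono: "mono_on {N..} h" and n: "in_block h y n" "N \<le> n"
    and m: "in_block h y' m"
  shows "real m < real n + \<bar>y' - y\<bar> + 1"
proof (cases "n < m")
  case True
  then have "h n \<le> h (m - 1)" using mono n(2) by (auto intro: mono_onD)
  then show ?thesis using n(1) m True by (auto simp: in_block_def of_nat_diff)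
qed simp

lemma in_block_unique:
  assumes "mono_on {N..} h" "in_block h y n" "in_block h y m" "N \<le> n" "N \<le> m"
  shows "n = m"
  using in_block_index_diff[of N h y n y m] in_block_index_diff[of N h y m y n] assms by simp

lemma in_block_exists:
  assumes mono: "mono_on {N..} h" and M: "N \<le> M" "1 \<le> M" and y: "real M + h M \<le> y"
  shows "\<exists>n>M. in_block h y n"
proof -
  define k where "k = M + 1 + nat \<lceil>y - h M - real M\<rceil>"
  have "h M \<le> h k" using mono M by (auto simp: k_def intro: mono_onD)
  then have k: "M < k \<and> y < real k + h k" unfolding k_def by linarith
  define n where "n = (LEAST n. M < n \<and> y < real n + h n)"
  have n: "M < n" "y < real n + h n"
    using LeastI[of "\<lambda>n. M < n \<and> y < real n + h n", OF k] by (simp_all add: n_def)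
  have "real (n - 1) + h (n - 1) \<le> y"
  proof (cases "n - 1 = M")
    case False
    then have "M < n - 1" using n(1) by simp
    moreover have "n - 1 < n" using n(1) by simp
    ultimately show ?thesis using not_less_Least[of "n - 1" "\<lambda>n. M < n \<and> y < real n + h n"]
      by (auto simp: n_def)
  qed (use y in simp)
  then have "in_block h y n" using n M by (auto simp: in_block_def of_nat_diff)
  then show ?thesis using n(1) by blast
qed

lemma eventually_in_block_index:
  assumes mono: "mono_on {N..} h"
  shows "\<forall>\<^sub>F y in at_top. M < block_index h y \<and> in_block h y (block_index h y)"
proof -
  define M' where "M' = max (max N M) 1"
  define B where "B = Max ((\<lambda>n. real n + h n) ` {..M'})"
  have "\<forall>\<^sub>F y in at_top. max B (real M' + h M') \<le> y" by (rule eventually_ge_at_top)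
  then show ?thesis
  proof (rule eventually_mono)
    fix y assume y: "max B (real M' + h M') \<le> y"
    have above: "M' < m" if "in_block h y m" for m
    proof (rule ccontr)
      assume "\<not> M' < m"
      then have "real m + h m \<le> B" unfolding B_def by (intro Max_ge) auto
      with that y show False by (auto simp: in_block_def)
    qed
    have "\<exists>n>M'. in_block h y n"
      by (rule in_block_exists[OF mono]) (use y in \<open>auto simp: M'_def\<close>)
    then obtain n where n: "in_block h y n" by blast
    have "block_index h y = n"
      unfolding block_index_def
    proof (rule the_equality[where P = "in_block h y", OF n])
      fix m assume "in_block h y m"
      then show "m = n" using in_block_unique[OF mono, of y m n] above n by (force simp: M'_def)
    qed
    then show "M < block_index h y \<and> in_block h y (block_index h y)"
      using n above[OF n] by (simp add: M'_def)
  qed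
qed

lemma tendsto_increment_window:
  fixes h :: "nat \<Rightarrow> 'a::real_normed_vector"
  assumes "(\<lambda>k. h (Suc k) - h k) \<longlonglongrightarrow> 0"
  shows "(\<lambda>k. h (k + j) - h k) \<longlonglongrightarrow> 0"
proof (induction j)
  case (Suc j)
  have "(\<lambda>k. h (Suc (k + j)) - h (k + j)) \<longlonglongrightarrow> 0"
    using LIMSEQ_ignore_initial_segment[OF assms, of j] by simp
  from tendsto_add[OF this Suc] show ?case by simp
qed simp

lemma tendsto_diff_bounded_index_gap:
  fixes h :: "nat \<Rightarrow> 'a::real_normed_vector"
  assumes incr: "(\<lambda>k. h (Suc k) - h k) \<longlonglongrightarrow> 0"
    and n: "filterlim n at_top F"
    and gap: "\<forall>\<^sub>F x in F. \<bar>real (m x) - real (n x)\<bar> \<le> C"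
  shows "((\<lambda>x. h (m x) - h (n x)) \<longlongrightarrow> 0) F"
proof (rule tendstoI)
  fix e :: real assume e: "e > 0"
  define K where "K = nat \<lceil>C\<rceil>"
  have "\<forall>\<^sub>F k in sequentially. \<forall>j\<in>{..K}. dist (h (k + j) - h k) 0 < e"
    using tendstoD[OF tendsto_increment_window[OF incr] e] by (intro eventually_ball_finite) auto
  then obtain M where M: "\<And>k j. M \<le> k \<Longrightarrow> j \<le> K \<Longrightarrow> norm (h (k + j) - h k) < e"
    unfolding eventually_sequentially by (auto simp: dist_norm)
  have "\<forall>\<^sub>F x in F. M + K \<le> n x" using n by (simp add: filterlim_at_top)
  with gap show "\<forall>\<^sub>F x in F. dist (h (m x) - h (n x)) 0 < e"
  proof eventually_elim
    case (elim x)
    have "C \<le> real K" by (simp add: K_def real_nat_ceiling_ge)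
    then have "real (m x) \<le> real (n x + K)" "real (n x) \<le> real (m x + K)"
      using elim(1) by simp_all
    then have gapK: "m x \<le> n x + K" "n x \<le> m x + K" by (simp_all only: of_nat_le_iff)
    show ?case
    proof (cases "m x \<le> n x")
      case True
      then have "norm (h (m x + (n x - m x)) - h (m x)) < e"
        using elim gapK by (intro M) auto
      then show ?thesis using True by (simp add: dist_norm norm_minus_commute)
    next
      case False
      then have "norm (h (n x + (m x - n x)) - h (n x)) < e"
        using elim gapK by (intro M) auto
      then show ?thesis using False by (simp add: dist_norm)
    qed
  qed
qed

lemma gstar_eq_level:
  assumes "in_block (level \<beta> L) y (block_index (level \<beta> L) y)"
  shows "gstar \<beta> L y = level \<beta> L (block_index (level \<beta> L) y - 1)"
proof -
  have pred: "(\<lambda>n::nat. 2 \<le> n \<and> real n - 1 + ln (L (exp (2 * real n - 2))) / (2 * \<beta>) \<le> y \<and>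
                 y < real n + ln (L (exp (2 * real n))) / (2 * \<beta>)) = in_block (level \<beta> L) y"
    (is "?P = _")
  proof
    fix n :: nat
    have "2 * real n - 2 = 2 * real (n - 1)" if "2 \<le> n" using that by (simp add: of_nat_diff)
    then show "?P n = in_block (level \<beta> L) y n" by (auto simp: in_block_def level_def)
  qed
  have "2 \<le> block_index (level \<beta> L) y" using assms by (simp add: in_block_def)
  then show ?thesis
    unfolding gstar_def Let_def pred block_index_def[symmetric]
    by (simp add: level_def of_nat_diff algebra_simps)
qed

lemma mono_on_level:
  assumes "\<beta> > 0" and pos: "\<forall>x>0. L x > 0"
    and "\<forall>\<^sub>F n in sequentially. L (exp (real n)) \<le> L (exp (real (Suc n)))"
  obtains N where "mono_on {N..} (level \<beta> L)"
proof -
  obtain N where N: "\<And>k. N \<le> k \<Longrightarrow> L (exp (real k)) \<le> L (exp (real (Suc k)))"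
    using assms(3) unfolding eventually_sequentially by blast
  have L_mono: "L (exp (real (N + a))) \<le> L (exp (real (N + b)))" if "a \<le> b" for a b
  proof (rule lift_Suc_mono_le[of "\<lambda>k. L (exp (real (N + k)))", OF _ that])
    fix k show "L (exp (real (N + k))) \<le> L (exp (real (N + Suc k)))"
      using N[of "N + k"] by simp
  qed
  have "mono_on {N..} (level \<beta> L)"
  proof (rule mono_onI)
    fix a b assume "a \<in> {N..}" "b \<in> {N..}" "a \<le> b"
    then have "L (exp (real (N + (2 * a - N)))) \<le> L (exp (real (N + (2 * b - N))))"
      by (intro L_mono) auto
    then have "L (exp (2 * real a)) \<le> L (exp (2 * real b))"
      using \<open>a \<in> {N..}\<close> \<open>b \<in> {N..}\<close> by (simp add: of_nat_diff)
    then show "level \<beta> L a \<le> level \<beta> L b"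
      using pos \<open>\<beta> > 0\<close> by (simp add: level_def divide_right_mono)
  qed
  then show ?thesis by (rule that)
qed

lemma level_increment_tendsto_zero:
  assumes "\<beta> > 0" and "slowly_varying L"
  shows "(\<lambda>k. level \<beta> L (Suc k) - level \<beta> L k) \<longlonglongrightarrow> 0"
proof -
  have pos: "\<And>x. x > 0 \<Longrightarrow> L x > 0"
    and ratio: "((\<lambda>x. L (exp 2 * x) / L x) \<longlongrightarrow> 1) at_top"
    using assms(2) unfolding slowly_varying_def by auto
  have "filterlim (\<lambda>k::nat. exp (2 * real k)) at_top sequentially"
    by (intro filterlim_compose[OF exp_at_top] filterlim_tendsto_pos_mult_at_top[OF tendsto_const _
          filterlim_real_sequentially]) simp
  from filterlim_compose[OF ratio this]
  have "(\<lambda>k. ln (L (exp 2 * exp (2 * real k)) / L (exp (2 * real k))) / (2 * \<beta>))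
          \<longlonglongrightarrow> ln 1 / (2 * \<beta>)"
    by (intro tendsto_divide tendsto_ln tendsto_const) (use assms(1) in auto)
  moreover have "ln (L (exp 2 * exp (2 * real k)) / L (exp (2 * real k))) / (2 * \<beta>)
                   = level \<beta> L (Suc k) - level \<beta> L k" for k
  proof -
    have "exp (2 * real (Suc k)) = exp 2 * exp (2 * real k)"
      by (simp add: exp_add[symmetric] algebra_simps)
    then show ?thesis
      using pos[of "exp 2 * exp (2 * real k)"] pos[of "exp (2 * real k)"]
      by (simp add: level_def ln_div diff_divide_distrib)
  qed
  ultimately show ?thesis by simp
qed

lemma gstar_shift_tendsto_zero:
  assumes "\<beta> > 0" and "slowly_varying L"
    and "\<forall>\<^sub>F n in sequentially. L (exp (real n)) \<le> L (exp (real (Suc n)))"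
  shows "((\<lambda>y. gstar \<beta> L (y + c) - gstar \<beta> L y) \<longlongrightarrow> 0) at_top"
proof -
  define h where "h = level \<beta> L"
  define n where "n y = block_index h y - 1" for y
  define m where "m y = block_index h (y + c) - 1" for y
  obtain N where mono: "mono_on {N..} h"
    using mono_on_level assms unfolding h_def slowly_varying_def by blast
  have shift: "filterlim (\<lambda>y. y + c) at_top at_top"
    using filterlim_tendsto_add_at_top[OF tendsto_const filterlim_ident, of c]
    by (simp add: add.commute)
  have lim_n: "filterlim n at_top at_top"
    unfolding filterlim_at_top n_def
  proof
    fix Z show "\<forall>\<^sub>F y in at_top. Z \<le> block_index h y - 1"
      using eventually_in_block_index[OF mono, of Z] by (rule eventually_mono) auto
  qed
  have gap: "\<forall>\<^sub>F y in at_top. \<bar>real (m y) - real (n y)\<bar> \<le> \<bar>c\<bar> + 1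
      \<and> gstar \<beta> L (y + c) - gstar \<beta> L y = h (m y) - h (n y)"
    using eventually_in_block_index[OF mono, of N]
          eventually_compose_filterlim[OF eventually_in_block_index[OF mono, of N] shift]
  proof eventually_elim
    case (elim y)
    define a b where "a = block_index h y" and "b = block_index h (y + c)"
    have "real b < real a + \<bar>c\<bar> + 1" "real a < real b + \<bar>c\<bar> + 1"
      using in_block_index_diff[OF mono, of y a "y + c" b]
            in_block_index_diff[OF mono, of "y + c" b y a] elim
      by (simp_all add: a_def b_def)
    moreover have "2 \<le> a" "2 \<le> b" using elim by (simp_all add: a_def b_def in_block_def)
    ultimately show ?case
      using elim gstar_eq_level[of \<beta> L, folded h_def]
      by (simp add: a_def b_def m_def n_def of_nat_diff)
  qed
  have "((\<lambda>y. h (m y) - h (n y)) \<longlongrightarrow> 0) at_top"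
    using tendsto_diff_bounded_index_gap[OF level_increment_tendsto_zero[OF assms(1,2)] lim_n,
            of m "\<bar>c\<bar> + 1"] eventually_mono[OF gap]
    by (simp add: h_def)
  then show ?thesis
    using gap by (auto elim: tendsto_cong[THEN iffD2, rotated] eventually_mono)
qed

theorem lemmaA2:
  fixes \<beta> A :: real and L :: "real \<Rightarrow> real"
  assumes "\<beta> > 0"
    and "slowly_varying L"
    and "\<forall>\<^sub>F n in sequentially. L (exp (real n)) \<le> L (exp (real (Suc n)))"
    and "A > 0"
  shows "((\<lambda>x. gstar \<beta> L (ln (A * x)) - gstar \<beta> L (ln x)) \<longlongrightarrow> 0) at_top"
proof -
  have eq: "\<forall>\<^sub>F x in at_top. gstar \<beta> L (ln (A * x)) - gstar \<beta> L (ln x)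
                               = gstar \<beta> L (ln x + ln A) - gstar \<beta> L (ln x)"
    using eventually_gt_at_top[of 0]
    by eventually_elim (use \<open>A > 0\<close> in \<open>simp add: ln_mult add.commute\<close>)
  show ?thesis
    unfolding tendsto_cong[OF eq]
    by (rule filterlim_compose[OF gstar_shift_tendsto_zero[OF assms(1-3)] ln_at_top])
qed

end
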